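(* Let $F$ be a field of characteristic $2$, let $\phi$ be an anisotropic quasilinear quadratic form over $F$, let $K$ be a purely transcendental field extension of $F$, and let $r$ be a positive integer. If $\phi_K$ is divisible by an $r$-fold quasi-Pfister form over $K$, then $\phi$ is divisible by an $r$-fold quasi-Pfister form over $F$.
   Context: A quasilinear quadratic form over a field of characteristic 2 is a quadratic form $\phi$ on a finite-dimensional space with $\phi(v+w)=\phi(v)+\phi(w)$. The $r$-fold quasi-Pfister form $\langle\langle a_1,\dots,a_r\rangle\rangle$ is $\sum_{S\subseteq\{1,\dots,r\}}(\prod_{j\in S}a_j)x_S^2$. $\phi$ is divisible by $\pi$ if $\phi\simeq\pi\otimes\sigma$ for some quasilinear quadratic form $\sigma$. *)

theory Defs
  imports Main
begin

text \<open>Quasilinear quadratic forms over a field of characteristic 2 are diagonal: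
  phi = <a_0,...,a_(n-1)>, i.e. phi(x) = sum_i a_i x_i^2 on F^n.
  We represent such a form by its list of diagonal coefficients.
  Vectors of F^n are functions nat => 'a (only indices < n matter).\<close>

definition qf_eval :: "'a::comm_ring_1 list \<Rightarrow> (nat \<Rightarrow> 'a) \<Rightarrow> 'a" where
  "qf_eval \<phi> x = (\<Sum>i<length \<phi>. \<phi> ! i * (x i)^2)"

definition anisotropic :: "'a::comm_ring_1 list \<Rightarrow> bool" where
  "anisotropic \<phi> \<longleftrightarrow> (\<forall>x. qf_eval \<phi> x = 0 \<longrightarrow> (\<forall>i<length \<phi>. x i = 0))"

definition isometric :: "'a::comm_ring_1 list \<Rightarrow> 'a list \<Rightarrow> bool" where
  "isometric \<phi> \<psi> \<longleftrightarrow> length \<phi> = length \<psi> \<and>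
     (\<exists>M N :: nat \<Rightarrow> nat \<Rightarrow> 'a.
        (\<forall>i<length \<phi>. \<forall>j<length \<phi>.
            (\<Sum>k<length \<phi>. M i k * N k j) = (if i = j then 1 else 0)) \<and>
        (\<forall>i<length \<phi>. \<forall>j<length \<phi>.
            (\<Sum>k<length \<phi>. N i k * M k j) = (if i = j then 1 else 0)) \<and>
        (\<forall>x. qf_eval \<phi> (\<lambda>i. \<Sum>j<length \<phi>. M i j * x j) = qf_eval \<psi> x))"

definition qf_tensor :: "'a::comm_ring_1 list \<Rightarrow> 'a list \<Rightarrow> 'a list" where
  "qf_tensor \<pi> \<sigma> = concat (map (\<lambda>a. map (\<lambda>b. a * b) \<sigma>) \<pi>)"

definition divisible_by :: "'a::comm_ring_1 list \<Rightarrow> 'a list \<Rightarrow> bool" where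
  "divisible_by \<phi> \<pi> \<longleftrightarrow> (\<exists>\<sigma>. isometric \<phi> (qf_tensor \<pi> \<sigma>))"

text \<open>Quasi-Pfister form <<a_1,...,a_r>>: coefficients prod_{j in S} a_j, S subset {1..r}.\<close>
fun quasi_pfister :: "'a::comm_ring_1 list \<Rightarrow> 'a list" where
  "quasi_pfister [] = [1]"
| "quasi_pfister (a # as) = quasi_pfister as @ map (\<lambda>c. a * c) (quasi_pfister as)"

text \<open>A field extension K/F is given by a ring
  homomorphism sigma : F -> K.
  A polynomial over F in variables from S is a finitely supported map p from monomials
  (finitely supported exponent maps m : K => nat with support in S) to F.\<close>

definition field_hom :: "('a::field \<Rightarrow> 'b::field) \<Rightarrow> bool" where
  "field_hom \<sigma> \<longleftrightarrow> \<sigma> 0 = 0 \<and> \<sigma> 1 = 1 \<and>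
     (\<forall>x y. \<sigma> (x + y) = \<sigma> x + \<sigma> y) \<and> (\<forall>x y. \<sigma> (x * y) = \<sigma> x * \<sigma> y)"

definition is_poly_over :: "'b set \<Rightarrow> (('b \<Rightarrow> nat) \<Rightarrow> 'a::zero) \<Rightarrow> bool" where
  "is_poly_over S p \<longleftrightarrow> finite {m. p m \<noteq> 0} \<and>
     (\<forall>m. p m \<noteq> 0 \<longrightarrow> finite {s. m s \<noteq> 0} \<and> {s. m s \<noteq> 0} \<subseteq> S)"

definition poly_eval :: "('a \<Rightarrow> 'b::field) \<Rightarrow> (('b \<Rightarrow> nat) \<Rightarrow> 'a::zero) \<Rightarrow> 'b" where
  "poly_eval \<sigma> p = (\<Sum>m\<in>{m. p m \<noteq> 0}. \<sigma> (p m) * (\<Prod>s\<in>{s. m s \<noteq> 0}. s ^ m s))"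

definition alg_indep :: "('a::field \<Rightarrow> 'b::field) \<Rightarrow> 'b set \<Rightarrow> bool" where
  "alg_indep \<sigma> S \<longleftrightarrow>
     (\<forall>p :: ('b \<Rightarrow> nat) \<Rightarrow> 'a. is_poly_over S p \<and> poly_eval \<sigma> p = 0 \<longrightarrow> (\<forall>m. p m = 0))"

definition subfield :: "'b::field set \<Rightarrow> bool" where
  "subfield L \<longleftrightarrow> 0 \<in> L \<and> 1 \<in> L \<and>
     (\<forall>x\<in>L. \<forall>y\<in>L. x + y \<in> L \<and> x * y \<in> L) \<and>
     (\<forall>x\<in>L. - x \<in> L \<and> inverse x \<in> L)"

definition generates_field :: "('a::field \<Rightarrow> 'b::field) \<Rightarrow> 'b set \<Rightarrow> bool" where
  "generates_field \<sigma> S \<longleftrightarrow>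
     (\<forall>L. subfield L \<and> range \<sigma> \<subseteq> L \<and> S \<subseteq> L \<longrightarrow> L = UNIV)"

definition purely_transcendental :: "('a::field \<Rightarrow> 'b::field) \<Rightarrow> bool" where
  "purely_transcendental \<sigma> \<longleftrightarrow> field_hom \<sigma> \<and>
     (\<exists>S. alg_indep \<sigma> S \<and> generates_field \<sigma> S)"

end

theory Submission
  imports Defs "HOL.Vector_Spaces"
begin

text \<open>
  In characteristic 2 a field \<open>F\<close> is a vector space over \<open>F\<^sup>2\<close>, and a diagonal quasilinear form
  \<open>\<langle>a\<^sub>1,\<dots>,a\<^sub>n\<rangle>\<close> is anisotropic iff its coefficients are distinct and \<open>F\<^sup>2\<close>-independent; two
  anisotropic forms are isometric iff their coefficients span the same \<open>F\<^sup>2\<close>-subspace \<open>V\<close>.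
  If the multiplicative stabilizer \<open>{e. e V \<subseteq> V}\<close> contains \<open>2\<^sup>r\<close> independent elements, one
  greedily builds an anisotropic \<open>\<pi> = \<langle>\<langle>\<alpha>\<^sub>1,\<dots>,\<alpha>\<^sub>r\<rangle>\<rangle>\<close> from them and then greedily picks
  coefficients \<open>\<tau>\<close> of \<open>\<phi>\<close> with \<open>\<pi> \<otimes> \<tau>\<close> anisotropic until it spans \<open>V\<close>; so \<open>\<phi> \<cong> \<pi> \<otimes> \<tau>\<close>.

  Over \<open>K = F(S)\<close>, if \<open>\<phi>\<^sub>K \<cong> \<langle>\<langle>\<beta>\<rangle>\<rangle> \<otimes> \<tau>\<close>, the \<open>2\<^sup>r\<close> independent coefficients of \<open>\<langle>\<langle>\<beta>\<rangle>\<rangle>\<close>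
  stabilize the \<open>K\<^sup>2\<close>-span of \<open>\<phi>\<^sub>K\<close>. For such a stabilizing \<open>c\<close>, clearing denominators gives
  polynomials with \<open>\<phi>\<^sub>i t = \<Sum>\<^sub>k \<phi>\<^sub>k h\<^sub>i\<^sub>k\<^sup>2\<close>; comparing coefficients of monomials (\<open>S\<close> is
  algebraically independent) shows that every coefficient of \<open>t\<close> stabilizes \<open>V\<close> and that \<open>t\<close>
  only involves even exponents, so \<open>c\<close> lies in the \<open>K\<^sup>2\<close>-span of the stabilizer of \<open>\<phi>\<close>. Hence
  that stabilizer contains \<open>2\<^sup>r\<close> \<open>F\<^sup>2\<close>-independent elements.
\<close>

lemma power2_add_char2:
  fixes x y :: "'a::comm_ring_1"
  assumes "(2::'a) = 0"
  shows "(x + y)^2 = x^2 + y^2"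
  using assms by (simp add: power2_sum)

lemma power2_diff_char2:
  fixes x y :: "'a::comm_ring_1"
  assumes "(2::'a) = 0"
  shows "(x - y)^2 = x^2 - y^2"
  using power2_add_char2[OF assms, of "x - y" y] by (simp add: eq_diff_eq)

lemma power2_sum_char2:
  fixes f :: "'b \<Rightarrow> 'a::comm_ring_1"
  assumes "(2::'a) = 0"
  shows "(sum f A)^2 = (\<Sum>x\<in>A. (f x)^2)"
  by (induct A rule: infinite_finite_induct) (auto simp: power2_add_char2[OF assms])

lemma sum_nth_distinct:
  "distinct xs \<Longrightarrow> (\<Sum>i<length xs. g (xs!i)) = (\<Sum>x\<in>set xs. g x)"
  by (simp add: sum.distinct_set_conv_list sum_list_sum_nth atLeast0LessThan)

section \<open>Quasilinear forms and the \<open>F\<^sup>2\<close>-span of their coefficients\<close>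

text \<open>In characteristic 2, \<open>F\<close> is a vector space over its subfield \<open>F\<^sup>2\<close>; the scalar \<open>c\<^sup>2\<close> is
  represented by \<open>c\<close>.\<close>
definition sq_scale :: "'a::field \<Rightarrow> 'a \<Rightarrow> 'a" where
  "sq_scale c x = c^2 * x"

abbreviation sq_span :: "'a::field set \<Rightarrow> 'a set" where
  "sq_span \<equiv> module.span sq_scale"

abbreviation sq_independent :: "'a::field set \<Rightarrow> bool" where
  "sq_independent A \<equiv> \<not> module.dependent sq_scale A"

lemma vector_space_sq_scale:
  assumes "(2::'a::field) = 0"
  shows "vector_space (sq_scale :: 'a \<Rightarrow> 'a \<Rightarrow> 'a)"
  unfolding vector_space_def sq_scale_def
  by (simp add: distrib_left distrib_right power_mult_distrib power2_add_char2[OF assms] mult.assoc)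

lemma qf_eval_sq_scale: "qf_eval \<phi> x = (\<Sum>i<length \<phi>. sq_scale (x i) (\<phi>!i))"
  by (simp add: qf_eval_def sq_scale_def mult.commute)

lemma qf_eval_cong:
  "(\<And>i. i < length \<phi> \<Longrightarrow> x i = y i) \<Longrightarrow> qf_eval \<phi> x = qf_eval \<phi> y"
  unfolding qf_eval_def by (rule sum.cong) auto

lemma qf_eval_unit:
  assumes "i < length \<phi>"
  shows "qf_eval \<phi> (\<lambda>k. if k = i then 1 else 0) = \<phi>!i"
  using assms by (simp add: qf_eval_def if_distrib[of "\<lambda>x. _ * x^2"] cong: if_cong)

lemma anisotropic_iff_distinct_sq_independent:
  assumes two: "(2::'a::field) = 0"
  shows "anisotropic (\<phi>::'a list) \<longleftrightarrow> distinct \<phi> \<and> sq_independent (set \<phi>)"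
proof -
  interpret V: vector_space "sq_scale::'a\<Rightarrow>'a\<Rightarrow>'a" using vector_space_sq_scale[OF two] .
  show ?thesis
  proof
    assume A: "anisotropic \<phi>"
    have d: "distinct \<phi>"
    proof (rule ccontr)
      assume "\<not> distinct \<phi>"
      then obtain i j where ij: "i < length \<phi>" "j < length \<phi>" "i \<noteq> j" "\<phi>!i = \<phi>!j"
        by (auto simp: distinct_conv_nth)
      let ?x = "\<lambda>k. if k = i \<or> k = j then (1::'a) else 0"
      have "qf_eval \<phi> ?x = (\<Sum>k\<in>{i,j}. \<phi>!k)"
        unfolding qf_eval_def by (rule sum.mono_neutral_cong_right) (use ij in auto)
      also have "\<dots> = 2 * \<phi>!i" using ij by simp
      finally have "qf_eval \<phi> ?x = 0" using two by simp
      then show False using A ij(1) unfolding anisotropic_def by force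
    qed
    moreover have "V.independent (set \<phi>)"
    proof (rule V.independent_if_scalars_zero)
      fix f v assume s: "(\<Sum>x\<in>set \<phi>. sq_scale (f x) x) = 0" and v: "v \<in> set \<phi>"
      have "qf_eval \<phi> (\<lambda>i. f (\<phi>!i)) = 0"
        using s sum_nth_distinct[OF d, of "\<lambda>x. sq_scale (f x) x"] by (simp add: qf_eval_sq_scale)
      then have "\<forall>i<length \<phi>. f (\<phi>!i) = 0" using A unfolding anisotropic_def by blast
      with v show "f v = 0" by (auto simp: in_set_conv_nth)
    qed simp
    ultimately show "distinct \<phi> \<and> V.independent (set \<phi>)" by blast
  next
    assume R: "distinct \<phi> \<and> V.independent (set \<phi>)"
    show "anisotropic \<phi>" unfolding anisotropic_def
    proof (intro allI impI)
      fix x i assume s: "qf_eval \<phi> x = 0" and i: "i < length \<phi>"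
      define u where "u v = x (inv_into {..<length \<phi>} ((!) \<phi>) v)" for v
      have inj: "inj_on ((!) \<phi>) {..<length \<phi>}"
        using R by (simp add: inj_on_def nth_eq_iff_index_eq)
      have u: "u (\<phi>!k) = x k" if "k < length \<phi>" for k using inj that by (simp add: u_def)
      have "(\<Sum>v\<in>set \<phi>. sq_scale (u v) v) = qf_eval \<phi> x"
        using sum_nth_distinct[of \<phi> "\<lambda>v. sq_scale (u v) v"] R u by (simp add: qf_eval_sq_scale)
      then have "u (\<phi>!i) = 0" using V.independentD[OF conjunct2[OF R] finite_set order_refl] s i by simp
      then show "x i = 0" using u i by simp
    qed
  qed
qed

lemma qf_eval_in_sq_span:
  assumes two: "(2::'a::field) = 0"
  shows "qf_eval (\<phi>::'a list) x \<in> sq_span (set \<phi>)"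
proof -
  interpret V: vector_space "sq_scale::'a\<Rightarrow>'a\<Rightarrow>'a" using vector_space_sq_scale[OF two] .
  show ?thesis unfolding qf_eval_sq_scale
    by (intro V.span_sum V.span_scale V.span_base) simp
qed

lemma sq_span_eq_range_qf_eval:
  assumes two: "(2::'a::field) = 0" and d: "distinct (\<phi>::'a list)"
  shows "sq_span (set \<phi>) = range (qf_eval \<phi>)"
proof -
  interpret V: vector_space "sq_scale::'a\<Rightarrow>'a\<Rightarrow>'a" using vector_space_sq_scale[OF two] .
  show ?thesis
  proof
    show "V.span (set \<phi>) \<subseteq> range (qf_eval \<phi>)"
    proof
      fix v assume "v \<in> V.span (set \<phi>)"
      then obtain u where "v = (\<Sum>w\<in>set \<phi>. sq_scale (u w) w)"
        using V.span_finite[of "set \<phi>"] by auto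
      then have "v = qf_eval \<phi> (\<lambda>k. u (\<phi>!k))"
        using sum_nth_distinct[OF d, of "\<lambda>w. sq_scale (u w) w"] by (simp add: qf_eval_sq_scale)
      then show "v \<in> range (qf_eval \<phi>)" by blast
    qed
  qed (use qf_eval_in_sq_span[OF two] in blast)
qed

lemma anisotropic_qf_eval_eqD:
  assumes two: "(2::'a::field) = 0" and A: "anisotropic (\<phi>::'a list)"
    and eq: "qf_eval \<phi> x = qf_eval \<phi> y" and i: "i < length \<phi>"
  shows "x i = y i"
proof -
  have "qf_eval \<phi> (\<lambda>k. x k - y k) = qf_eval \<phi> x - qf_eval \<phi> y"
    unfolding qf_eval_def
    by (simp add: power2_diff_char2[OF two] right_diff_distrib sum_subtractf)
  then have "qf_eval \<phi> (\<lambda>k. x k - y k) = 0" using eq by simp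
  then show ?thesis using A i unfolding anisotropic_def by auto
qed

lemma anisotropic_length_le:
  assumes two: "(2::'a::field) = 0" and A: "anisotropic (\<phi>::'a list)"
    and sub: "set \<phi> \<subseteq> sq_span (set \<psi>)"
  shows "length \<phi> \<le> length \<psi>"
proof -
  interpret V: vector_space "sq_scale::'a\<Rightarrow>'a\<Rightarrow>'a" using vector_space_sq_scale[OF two] .
  have "distinct \<phi>" "V.independent (set \<phi>)"
    using A anisotropic_iff_distinct_sq_independent[OF two] by auto
  then have "length \<phi> \<le> card (set \<psi>)"
    using V.independent_span_bound[OF finite_set _ sub] distinct_card by metis
  then show ?thesis using card_length le_trans by blast
qed

lemma qf_eval_linear_subst:
  assumes two: "(2::'a::comm_ring_1) = 0"
  shows "qf_eval (\<phi>::'a list) (\<lambda>i. \<Sum>j<m. M i j * x j) = (\<Sum>j<m. qf_eval \<phi> (\<lambda>i. M i j) * (x j)^2)"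
proof -
  have "qf_eval \<phi> (\<lambda>i. \<Sum>j<m. M i j * x j) = (\<Sum>i<length \<phi>. \<Sum>j<m. \<phi>!i * (M i j)^2 * (x j)^2)"
    unfolding qf_eval_def
    by (simp add: power2_sum_char2[OF two] power_mult_distrib sum_distrib_left mult.assoc)
  also have "\<dots> = (\<Sum>j<m. qf_eval \<phi> (\<lambda>i. M i j) * (x j)^2)"
    by (subst sum.swap) (simp add: qf_eval_def sum_distrib_right)
  finally show ?thesis .
qed

lemma representing_matrices_inverse:
  assumes two: "(2::'a::field) = 0" and A: "anisotropic (\<psi>::'a list)"
    and n: "length \<phi> = length \<psi>"
    and M: "\<And>j. j < length \<psi> \<Longrightarrow> qf_eval \<phi> (\<lambda>i. M i j) = \<psi>!j"
    and N: "\<And>i. i < length \<phi> \<Longrightarrow> qf_eval \<psi> (\<lambda>k. N k i) = \<phi>!i"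
    and k: "k < length \<psi>" and j: "j < length \<psi>"
  shows "(\<Sum>i<length \<psi>. N k i * M i j) = (if k = j then 1 else 0)"
proof -
  have "qf_eval \<psi> (\<lambda>k. \<Sum>i<length \<psi>. N k i * M i j)
      = (\<Sum>i<length \<psi>. qf_eval \<psi> (\<lambda>k. N k i) * (M i j)^2)"
    by (rule qf_eval_linear_subst[OF two])
  also have "\<dots> = (\<Sum>i<length \<phi>. \<phi>!i * (M i j)^2)" using N n by simp
  also have "\<dots> = qf_eval \<psi> (\<lambda>k. if k = j then 1 else 0)"
    using M[OF j] qf_eval_unit[OF j] by (simp add: qf_eval_def)
  finally show ?thesis using anisotropic_qf_eval_eqD[OF two A _ k] by blast
qed

lemma exists_representing_matrix:
  assumes two: "(2::'a::field) = 0" and d: "distinct (\<phi>::'a list)" and sub: "set \<psi> \<subseteq> sq_span (set \<phi>)"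
  shows "\<exists>M. \<forall>j<length \<psi>. qf_eval \<phi> (\<lambda>i. M i j) = \<psi>!j"
proof -
  have "\<forall>j\<in>{..<length \<psi>}. \<exists>c. qf_eval \<phi> c = \<psi>!j"
  proof
    fix j assume "j \<in> {..<length \<psi>}"
    then have "\<psi>!j \<in> range (qf_eval \<phi>)" using sub sq_span_eq_range_qf_eval[OF two d] by auto
    then show "\<exists>c. qf_eval \<phi> c = \<psi>!j" by (metis rangeE)
  qed
  then obtain c where "\<forall>j\<in>{..<length \<psi>}. qf_eval \<phi> (c j) = \<psi>!j" by (metis bchoice)
  then show ?thesis by (intro exI[of _ "\<lambda>i j. c j i"]) simp
qed

lemma isometric_if_sq_span_eq:
  assumes two: "(2::'a::field) = 0"
    and A\<phi>: "anisotropic (\<phi>::'a list)" and A\<psi>: "anisotropic \<psi>"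
    and span: "sq_span (set \<phi>) = sq_span (set \<psi>)"
  shows "isometric \<phi> \<psi>"
proof -
  have d\<phi>: "distinct \<phi>" and d\<psi>: "distinct \<psi>"
    using A\<phi> A\<psi> anisotropic_iff_distinct_sq_independent[OF two] by auto
  interpret V: vector_space "sq_scale::'a\<Rightarrow>'a\<Rightarrow>'a" using vector_space_sq_scale[OF two] .
  have sub\<phi>: "set \<phi> \<subseteq> V.span (set \<psi>)" and sub\<psi>: "set \<psi> \<subseteq> V.span (set \<phi>)"
    using span V.span_superset by blast+
  have n: "length \<phi> = length \<psi>"
    using anisotropic_length_le[OF two A\<phi> sub\<phi>] anisotropic_length_le[OF two A\<psi> sub\<psi>] by simp
  obtain M where M: "\<And>j. j < length \<psi> \<Longrightarrow> qf_eval \<phi> (\<lambda>i. M i j) = \<psi>!j"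
    using exists_representing_matrix[OF two d\<phi> sub\<psi>] by blast
  obtain N where N: "\<And>i. i < length \<phi> \<Longrightarrow> qf_eval \<psi> (\<lambda>k. N k i) = \<phi>!i"
    using exists_representing_matrix[OF two d\<psi> sub\<phi>] by blast
  have "(\<Sum>k<length \<phi>. N i k * M k j) = (if i = j then 1 else 0)"
    if "i < length \<phi>" "j < length \<phi>" for i j
    using representing_matrices_inverse[OF two A\<psi> n M N] that n by simp
  moreover have "(\<Sum>k<length \<phi>. M i k * N k j) = (if i = j then 1 else 0)"
    if "i < length \<phi>" "j < length \<phi>" for i j
    using representing_matrices_inverse[OF two A\<phi> n[symmetric] N M] that n by simp
  moreover have "qf_eval \<phi> (\<lambda>i. \<Sum>j<length \<phi>. M i j * x j) = qf_eval \<psi> x" for x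
  proof -
    have "qf_eval \<phi> (\<lambda>i. \<Sum>j<length \<phi>. M i j * x j) = (\<Sum>j<length \<psi>. \<psi>!j * (x j)^2)"
      by (simp add: qf_eval_linear_subst[OF two] M n)
    then show ?thesis by (simp add: qf_eval_def)
  qed
  ultimately show ?thesis unfolding isometric_def using n by (intro conjI exI[of _ M] exI[of _ N]) auto
qed

lemma isometric_sq_span_eq:
  assumes two: "(2::'a::field) = 0" and iso: "isometric (\<phi>::'a list) \<psi>"
  shows "sq_span (set \<phi>) = sq_span (set \<psi>)"
proof -
  interpret V: vector_space "sq_scale::'a\<Rightarrow>'a\<Rightarrow>'a" using vector_space_sq_scale[OF two] .
  obtain M N where n: "length \<phi> = length \<psi>"
    and MN: "\<And>i j. i < length \<phi> \<Longrightarrow> j < length \<phi> \<Longrightarrow>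
      (\<Sum>k<length \<phi>. M i k * N k j) = (if i = j then 1 else 0)"
    and Q: "\<And>x. qf_eval \<phi> (\<lambda>i. \<Sum>j<length \<phi>. M i j * x j) = qf_eval \<psi> x"
    using iso unfolding isometric_def by blast
  have "set \<psi> \<subseteq> V.span (set \<phi>)"
  proof
    fix v assume "v \<in> set \<psi>"
    then obtain j where j: "j < length \<psi>" "v = \<psi>!j" by (auto simp: in_set_conv_nth)
    have "v = qf_eval \<psi> (\<lambda>k. if k = j then 1 else 0)" using qf_eval_unit[OF j(1)] j(2) by simp
    also have "\<dots> = qf_eval \<phi> (\<lambda>i. \<Sum>k<length \<phi>. M i k * (if k = j then 1 else 0))"
      by (rule Q[symmetric])
    finally show "v \<in> V.span (set \<phi>)" using qf_eval_in_sq_span[OF two] by simp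
  qed
  moreover have "set \<phi> \<subseteq> V.span (set \<psi>)"
  proof
    fix v assume "v \<in> set \<phi>"
    then obtain i where i: "i < length \<phi>" "v = \<phi>!i" by (auto simp: in_set_conv_nth)
    have "v = qf_eval \<phi> (\<lambda>l. if l = i then 1 else 0)" using qf_eval_unit[OF i(1)] i(2) by simp
    also have "\<dots> = qf_eval \<phi> (\<lambda>l. \<Sum>k<length \<phi>. M l k * N k i)"
      by (rule qf_eval_cong) (simp add: MN i(1))
    also have "\<dots> = qf_eval \<psi> (\<lambda>k. N k i)" by (rule Q)
    finally show "v \<in> V.span (set \<psi>)" using qf_eval_in_sq_span[OF two] by simp
  qed
  ultimately show ?thesis by (simp add: V.span_eq)
qed

lemma isometric_anisotropic:
  assumes two: "(2::'a::field) = 0" and iso: "isometric (\<phi>::'a list) \<psi>"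
    and A: "anisotropic \<phi>"
  shows "anisotropic \<psi>"
  unfolding anisotropic_def
proof (intro allI impI)
  fix x k assume x: "qf_eval \<psi> x = 0" and k: "k < length \<psi>"
  obtain M N where n: "length \<phi> = length \<psi>"
    and NM: "\<And>i j. i < length \<phi> \<Longrightarrow> j < length \<phi> \<Longrightarrow>
      (\<Sum>k<length \<phi>. N i k * M k j) = (if i = j then 1 else 0)"
    and Q: "\<And>x. qf_eval \<phi> (\<lambda>i. \<Sum>j<length \<phi>. M i j * x j) = qf_eval \<psi> x"
    using iso unfolding isometric_def by blast
  let ?n = "length \<phi>"
  have z: "qf_eval \<phi> (\<lambda>i. \<Sum>j<?n. M i j * x j) = 0" using Q x by simp
  have Mx: "(\<Sum>j<?n. M l j * x j) = 0" if "l < ?n" for l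
    using A[unfolded anisotropic_def, rule_format, OF z that] by simp
  have "x k = (\<Sum>j<?n. (if k = j then 1 else 0) * x j)"
    using k n by (simp add: if_distrib[of "\<lambda>y. y * _"] cong: if_cong)
  also have "\<dots> = (\<Sum>j<?n. (\<Sum>l<?n. N k l * M l j) * x j)"
    by (rule sum.cong) (use NM k n in simp_all)
  also have "\<dots> = (\<Sum>j<?n. \<Sum>l<?n. N k l * (M l j * x j))"
    by (simp add: sum_distrib_right mult.assoc)
  also have "\<dots> = (\<Sum>l<?n. N k l * (\<Sum>j<?n. M l j * x j))"
    by (subst sum.swap) (simp add: sum_distrib_left)
  also have "\<dots> = 0" using Mx by simp
  finally show "x k = 0" .
qed

lemma sq_span_mult_closed:
  assumes two: "(2::'a::field) = 0"
    and gen: "\<And>a. a \<in> A \<Longrightarrow> p * a \<in> sq_span B" and u: "u \<in> sq_span A"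
  shows "p * (u::'a) \<in> sq_span B"
proof -
  interpret V: vector_space "sq_scale::'a\<Rightarrow>'a\<Rightarrow>'a" using vector_space_sq_scale[OF two] .
  from u show ?thesis
  proof (induct rule: V.span_induct_alt)
    case base then show ?case by (simp add: V.span_zero)
  next
    case (step c x y)
    have "p * (sq_scale c x + y) = sq_scale c (p * x) + p * y"
      by (simp add: sq_scale_def algebra_simps)
    then show ?case using V.span_add V.span_scale gen[OF step(1)] step(2) by simp
  qed
qed

lemma sq_span_mult_right:
  assumes two: "(2::'a::field) = 0" and u: "u \<in> sq_span A"
  shows "u * (t::'a) \<in> sq_span ((\<lambda>a. a * t) ` A)"
proof -
  interpret V: vector_space "sq_scale::'a\<Rightarrow>'a\<Rightarrow>'a" using vector_space_sq_scale[OF two] .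
  have "t * u \<in> V.span ((\<lambda>a. a * t) ` A)"
    by (rule sq_span_mult_closed[OF two _ u]) (auto simp: mult.commute intro!: V.span_base)
  then show ?thesis by (simp add: mult.commute)
qed

section \<open>Quasi-Pfister forms and the multiplicative stabilizer\<close>

definition mult_stabilizer :: "'a::field set \<Rightarrow> 'a set" where
  "mult_stabilizer A = {e. \<forall>x\<in>A. e * x \<in> sq_span A}"

lemma mult_stabilizer_sq_span:
  assumes two: "(2::'a::field) = 0" and e: "e \<in> mult_stabilizer A" and u: "u \<in> sq_span A"
  shows "e * u \<in> sq_span (A::'a set)"
  by (rule sq_span_mult_closed[OF two _ u]) (use e in \<open>auto simp: mult_stabilizer_def\<close>)

text \<open>Multiplication by \<open>x\<close> preserves \<open>sq_span A\<close>, so \<open>x * (x * v) = x\<^sup>2 * v\<close> lies in it,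
  and \<open>x\<^sup>2\<close> is a scalar.\<close>
lemma mem_sq_span_if_mult_mem:
  assumes two: "(2::'a::field) = 0" and closed: "P \<subseteq> mult_stabilizer A"
    and x: "x \<in> sq_span P" "x \<noteq> 0" and xv: "x * v \<in> sq_span A"
  shows "(v::'a) \<in> sq_span A"
proof -
  interpret V: vector_space "sq_scale::'a\<Rightarrow>'a\<Rightarrow>'a" using vector_space_sq_scale[OF two] .
  have "(x * v) * x \<in> V.span A"
    by (rule sq_span_mult_closed[OF two _ x(1)])
      (use mult_stabilizer_sq_span[OF two] closed xv in \<open>auto simp: mult.commute\<close>)
  then have "sq_scale (inverse x) (x * (x * v)) \<in> V.span A"
    by (intro V.span_scale) (simp add: mult_ac)
  moreover have "sq_scale (inverse x) (x * (x * v)) = v"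
    using x(2) by (simp add: sq_scale_def power2_eq_square field_simps)
  ultimately show ?thesis by simp
qed

lemma sq_independent_Un_mult:
  assumes two: "(2::'a::field) = 0"
    and fA: "finite A" and iA: "sq_independent A"
    and fP: "finite P" and iP: "sq_independent P"
    and v: "v \<notin> sq_span A"
    and closed: "P \<subseteq> mult_stabilizer A"
  shows "sq_independent (A \<union> (\<lambda>p. p * (v::'a)) ` P)" and "A \<inter> (\<lambda>p. p * v) ` P = {}"
    and "inj_on (\<lambda>p. p * v) P"
proof -
  interpret V: vector_space "sq_scale::'a\<Rightarrow>'a\<Rightarrow>'a" using vector_space_sq_scale[OF two] .
  let ?B = "(\<lambda>p. p * v) ` P"
  have key: "x = 0" if "x \<in> V.span P" "x * v \<in> V.span A" for x
    using mem_sq_span_if_mult_mem[OF two closed] that v by blast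
  show inj: "inj_on (\<lambda>p. p * v) P" using v V.span_zero by (auto simp: inj_on_def)
  show disj: "A \<inter> ?B = {}"
  proof (rule ccontr)
    assume "A \<inter> ?B \<noteq> {}"
    then obtain p where p: "p \<in> P" "p * v \<in> A" by auto
    then have "p = 0" using key[of p] V.span_base by blast
    then show False using iP p(1) V.dependent_zero by blast
  qed
  show "V.independent (A \<union> ?B)"
  proof (rule V.independent_if_scalars_zero)
    show "finite (A \<union> ?B)" using fA fP by simp
  next
    fix f x assume s: "(\<Sum>x\<in>A \<union> ?B. sq_scale (f x) x) = 0" and x: "x \<in> A \<union> ?B"
    let ?e = "\<Sum>p\<in>P. sq_scale (f (p * v)) p"
    have sB: "(\<Sum>x\<in>?B. sq_scale (f x) x) = ?e * v"
      by (simp add: sum.reindex[OF inj] sum_distrib_right sq_scale_def mult.assoc)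
    have sAB: "(\<Sum>x\<in>A. sq_scale (f x) x) + ?e * v = 0"
      using s sB by (simp add: sum.union_disjoint[OF fA _ disj] fP)
    then have "?e * v = - (\<Sum>x\<in>A. sq_scale (f x) x)" by (simp add: eq_neg_iff_add_eq_0 add.commute)
    then have "?e * v \<in> V.span A"
      by (simp add: V.span_neg V.span_sum V.span_scale V.span_base)
    moreover have "?e \<in> V.span P" by (simp add: V.span_sum V.span_scale V.span_base)
    ultimately have e0: "?e = 0" using key by blast
    have fB: "\<forall>p\<in>P. f (p * v) = 0"
      using V.independentD[OF iP fP order_refl e0] by blast
    have "(\<Sum>x\<in>A. sq_scale (f x) x) = 0" using sAB e0 by simp
    then have "\<forall>a\<in>A. f a = 0" using V.independentD[OF iA fA order_refl] by blast
    then show "f x = 0" using x fB by auto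
  qed
qed

lemma set_quasi_pfister_Cons:
  "set (quasi_pfister (a # as)) = set (quasi_pfister as) \<union> (\<lambda>c. c * a) ` set (quasi_pfister as)"
  by (auto simp: mult.commute)

lemma length_quasi_pfister: "length (quasi_pfister as) = 2 ^ length as"
  by (induct as) auto

lemma one_in_quasi_pfister: "1 \<in> set (quasi_pfister as)"
  by (induct as) auto

lemma quasi_pfister_subset_mult_stabilizer_self:
  assumes two: "(2::'a::field) = 0"
  shows "set (quasi_pfister as) \<subseteq> mult_stabilizer (set (quasi_pfister (as::'a list)))"
proof -
  interpret V: vector_space "sq_scale::'a\<Rightarrow>'a\<Rightarrow>'a" using vector_space_sq_scale[OF two] .
  have "p * q \<in> V.span (set (quasi_pfister as))"
    if "p \<in> set (quasi_pfister as)" "q \<in> set (quasi_pfister as)" for p q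
    using that
  proof (induct as arbitrary: p q)
    case Nil then show ?case by (simp add: V.span_base)
  next
    case (Cons a as)
    let ?Q = "set (quasi_pfister as)"
    have sub: "V.span ?Q \<subseteq> V.span (set (quasi_pfister (a # as)))"
      and sub_a: "V.span ((\<lambda>c. c * a) ` ?Q) \<subseteq> V.span (set (quasi_pfister (a # as)))"
      by (auto intro!: V.span_mono simp only: set_quasi_pfister_Cons)
    from Cons.prems consider (1) "p \<in> ?Q" "q \<in> ?Q"
      | (2) x where "p \<in> ?Q" "x \<in> ?Q" "q = x * a" | (3) y where "y \<in> ?Q" "p = y * a" "q \<in> ?Q"
      | (4) x y where "x \<in> ?Q" "y \<in> ?Q" "p = x * a" "q = y * a"
      unfolding set_quasi_pfister_Cons by blast
    then show ?case
    proof cases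
      case 1 then show ?thesis using Cons.hyps sub by blast
    next
      case 2
      have "(p * x) * a \<in> V.span ((\<lambda>c. c * a) ` ?Q)"
        using sq_span_mult_right[OF two Cons.hyps[OF 2(1,2)]] .
      then show ?thesis using 2 sub_a by (auto simp: mult_ac)    next
      case 3
      have "(y * q) * a \<in> V.span ((\<lambda>c. c * a) ` ?Q)"
        using sq_span_mult_right[OF two Cons.hyps[OF 3(1,3)]] .
      then show ?thesis using 3 sub_a by (auto simp: mult_ac)
    next
      case 4
      have "sq_scale a (x * y) \<in> V.span ?Q" using Cons.hyps[OF 4(1,2)] by (rule V.span_scale)
      moreover have "p * q = sq_scale a (x * y)"
        using 4 by (simp add: sq_scale_def power2_eq_square mult_ac)
      ultimately show ?thesis using sub by auto
    qed
  qed
  then show ?thesis by (auto simp: mult_stabilizer_def)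
qed

lemma mult_stabilizer_mult:
  assumes two: "(2::'a::field) = 0" and e: "e \<in> mult_stabilizer A" and f: "f \<in> mult_stabilizer A"
  shows "e * f \<in> mult_stabilizer (A::'a set)"
  using mult_stabilizer_sq_span[OF two e] f by (simp add: mult_stabilizer_def mult.assoc)

lemma one_in_mult_stabilizer:
  assumes two: "(2::'a::field) = 0"
  shows "1 \<in> mult_stabilizer (A::'a set)"
proof -
  interpret V: vector_space "sq_scale::'a\<Rightarrow>'a\<Rightarrow>'a" using vector_space_sq_scale[OF two] .
  show ?thesis by (auto simp: mult_stabilizer_def intro: V.span_base)
qed

lemma quasi_pfister_subset_mult_stabilizer:
  assumes two: "(2::'a::field) = 0"
  shows "set as \<subseteq> mult_stabilizer A \<Longrightarrow> set (quasi_pfister as) \<subseteq> mult_stabilizer (A::'a set)"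
  by (induct as) (auto simp: one_in_mult_stabilizer[OF two] mult_stabilizer_mult[OF two])

lemma set_qf_tensor: "set (qf_tensor \<pi> \<tau>) = {p * t | p t. p \<in> set \<pi> \<and> t \<in> set \<tau>}"
  by (auto simp: qf_tensor_def)

lemma length_qf_tensor: "length (qf_tensor \<pi> \<tau>) = length \<pi> * length \<tau>"
  by (induct \<pi>) (auto simp: qf_tensor_def)

lemma qf_tensor_Nil [simp]: "qf_tensor \<pi> [] = []"
  by (induct \<pi>) (auto simp: qf_tensor_def)

lemma set_qf_tensor_snoc:
  "set (qf_tensor \<pi> (\<tau> @ [v])) = set (qf_tensor \<pi> \<tau>) \<union> (\<lambda>p. p * v) ` set \<pi>"
  by (auto simp: set_qf_tensor)

lemma qf_tensor_mult_stabilizer: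
  assumes two: "(2::'a::field) = 0" and closed: "set \<pi> \<subseteq> mult_stabilizer (set \<pi>)"
  shows "set \<pi> \<subseteq> mult_stabilizer (set (qf_tensor \<pi> (\<tau>::'a list)))"
proof
  interpret V: vector_space "sq_scale::'a\<Rightarrow>'a\<Rightarrow>'a" using vector_space_sq_scale[OF two] .
  fix p assume p: "p \<in> set \<pi>"
  have "p * a \<in> V.span (set (qf_tensor \<pi> \<tau>))" if a: "a \<in> set (qf_tensor \<pi> \<tau>)" for a
  proof -
    obtain q t where qt: "a = q * t" "q \<in> set \<pi>" "t \<in> set \<tau>"
      using a by (auto simp: set_qf_tensor)
    have "p * q \<in> V.span (set \<pi>)" using closed p qt(2) by (auto simp: mult_stabilizer_def)
    then have "(p * q) * t \<in> V.span ((\<lambda>c. c * t) ` set \<pi>)" by (rule sq_span_mult_right[OF two])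
    moreover have "V.span ((\<lambda>c. c * t) ` set \<pi>) \<subseteq> V.span (set (qf_tensor \<pi> \<tau>))"
      by (rule V.span_mono) (use qt(3) in \<open>auto simp: set_qf_tensor\<close>)
    ultimately show ?thesis using qt by (auto simp: mult.assoc)
  qed
  then show "p \<in> mult_stabilizer (set (qf_tensor \<pi> \<tau>))" by (simp add: mult_stabilizer_def)
qed

lemma anisotropic_qf_tensor_snoc:
  assumes two: "(2::'a::field) = 0" and A\<pi>: "anisotropic (\<pi>::'a list)"
    and closed: "set \<pi> \<subseteq> mult_stabilizer (set \<pi>)"
    and A: "anisotropic (qf_tensor \<pi> \<tau>)" and v: "v \<notin> sq_span (set (qf_tensor \<pi> \<tau>))"
  shows "anisotropic (qf_tensor \<pi> (\<tau> @ [v]))"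
proof -
  let ?A = "set (qf_tensor \<pi> \<tau>)" and ?B = "(\<lambda>p. p * v) ` set \<pi>"
  have dA: "distinct (qf_tensor \<pi> \<tau>)" and iA: "sq_independent ?A"
    using A anisotropic_iff_distinct_sq_independent[OF two] by auto
  have d\<pi>: "distinct \<pi>" and i\<pi>: "sq_independent (set \<pi>)"
    using A\<pi> anisotropic_iff_distinct_sq_independent[OF two] by auto
  note ext = sq_independent_Un_mult[OF two finite_set iA finite_set i\<pi> v
      qf_tensor_mult_stabilizer[OF two closed]]
  have "card (set (qf_tensor \<pi> (\<tau> @ [v]))) = card ?A + card ?B"
    using ext(2) by (simp add: set_qf_tensor_snoc card_Un_disjoint)
  also have "\<dots> = length (qf_tensor \<pi> (\<tau> @ [v]))"
    using ext(3) dA d\<pi> by (simp add: distinct_card card_image length_qf_tensor)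
  finally have "distinct (qf_tensor \<pi> (\<tau> @ [v]))" by (rule card_distinct)
  then show ?thesis
    using ext(1) anisotropic_iff_distinct_sq_independent[OF two] by (simp add: set_qf_tensor_snoc)
qed

lemma set_qf_tensor_subset_sq_span:
  "set \<pi> \<subseteq> mult_stabilizer (set \<phi>) \<Longrightarrow> set \<tau> \<subseteq> set \<phi> \<Longrightarrow>
    set (qf_tensor \<pi> \<tau>) \<subseteq> sq_span (set \<phi>)"
  by (auto simp: set_qf_tensor mult_stabilizer_def)

lemma exists_anisotropic_quasi_pfister:
  assumes two: "(2::'a::field) = 0"
    and fC: "finite C" and iC: "sq_independent C" and cC: "2 ^ r \<le> card C"
  shows "\<exists>\<alpha>. length \<alpha> = r \<and> set \<alpha> \<subseteq> C \<and> anisotropic (quasi_pfister (\<alpha>::'a list))"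
proof -
  interpret V: vector_space "sq_scale::'a\<Rightarrow>'a\<Rightarrow>'a" using vector_space_sq_scale[OF two] .
  have "\<exists>\<alpha>. length \<alpha> = k \<and> set \<alpha> \<subseteq> C \<and> anisotropic (quasi_pfister \<alpha>)" if "k \<le> r" for k
    using that
  proof (induct k)
    case 0 then show ?case by (intro exI[of _ "[]"]) (simp add: anisotropic_def qf_eval_def)
  next
    case (Suc k)
    then obtain \<alpha> where \<alpha>: "length \<alpha> = k" "set \<alpha> \<subseteq> C" "anisotropic (quasi_pfister \<alpha>)" by auto
    let ?Q = "set (quasi_pfister \<alpha>)"
    have dQ: "distinct (quasi_pfister \<alpha>)" and iQ: "V.independent ?Q"
      using \<alpha>(3) anisotropic_iff_distinct_sq_independent[OF two] by auto
    have "card ?Q = 2 ^ k" using dQ \<alpha>(1) by (simp add: distinct_card length_quasi_pfister)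
    also have "\<dots> < 2 ^ r" using Suc.prems by simp
    finally have "card ?Q < card C" using cC by linarith
    then have "\<not> C \<subseteq> V.span ?Q" using V.independent_span_bound[OF finite_set iC] by fastforce
    then obtain \<beta> where \<beta>: "\<beta> \<in> C" "\<beta> \<notin> V.span ?Q" by blast
    note ext = sq_independent_Un_mult[OF two finite_set iQ finite_set iQ \<beta>(2)
        quasi_pfister_subset_mult_stabilizer_self[OF two]]
    have "(\<lambda>c. \<beta> * c) = (\<lambda>p. p * \<beta>)" by (auto simp: mult.commute)
    then have "distinct (quasi_pfister (\<beta> # \<alpha>))" using ext(2,3) dQ by (simp add: distinct_map)
    moreover have "V.independent (set (quasi_pfister (\<beta> # \<alpha>)))"
      using ext(1) by (simp only: set_quasi_pfister_Cons not_False_eq_True)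
    ultimately have "anisotropic (quasi_pfister (\<beta> # \<alpha>))"
      using anisotropic_iff_distinct_sq_independent[OF two] by blast
    then show ?case using \<alpha> \<beta>(1) by (intro exI[of _ "\<beta> # \<alpha>"]) auto
  qed
  then show ?thesis by blast
qed

lemma exists_qf_tensor_basis:
  assumes two: "(2::'a::field) = 0" and A\<pi>: "anisotropic (\<pi>::'a list)" and ne: "\<pi> \<noteq> []"
    and closed: "set \<pi> \<subseteq> mult_stabilizer (set \<pi>)"
    and stab: "set \<pi> \<subseteq> mult_stabilizer (set \<phi>)"
  shows "\<exists>\<tau>. set \<tau> \<subseteq> set \<phi> \<and> anisotropic (qf_tensor \<pi> \<tau>) \<and>
    set \<phi> \<subseteq> sq_span (set (qf_tensor \<pi> \<tau>))"
proof (rule ccontr)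
  assume none: "\<not> ?thesis"
  have "\<exists>\<tau>. set \<tau> \<subseteq> set \<phi> \<and> anisotropic (qf_tensor \<pi> \<tau>) \<and> length \<tau> = k" for k
  proof (induct k)
    case 0 then show ?case by (intro exI[of _ "[]"]) (simp add: anisotropic_def)
  next
    case (Suc k)
    then obtain \<tau> where \<tau>: "set \<tau> \<subseteq> set \<phi>" "anisotropic (qf_tensor \<pi> \<tau>)" "length \<tau> = k" by blast
    with none obtain v where "v \<in> set \<phi>" "v \<notin> sq_span (set (qf_tensor \<pi> \<tau>))" by blast
    then show ?case
      using \<tau> anisotropic_qf_tensor_snoc[OF two A\<pi> closed \<tau>(2)] by (intro exI[of _ "\<tau> @ [v]"]) auto
  qed
  then obtain \<tau> where \<tau>: "set \<tau> \<subseteq> set \<phi>" "anisotropic (qf_tensor \<pi> \<tau>)" "length \<tau> = length \<phi> + 1"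
    by blast
  have "length (qf_tensor \<pi> \<tau>) \<le> length \<phi>"
    using anisotropic_length_le[OF two \<tau>(2) set_qf_tensor_subset_sq_span[OF stab \<tau>(1)]] .
  then show False using ne \<tau>(3) by (cases \<pi>) (simp_all add: length_qf_tensor)
qed

lemma divisible_by_quasi_pfister_if_large_stabilizer:
  assumes two: "(2::'a::field) = 0" and A: "anisotropic (\<phi>::'a list)"
    and C: "C \<subseteq> mult_stabilizer (set \<phi>)" "finite C" "sq_independent C" "2 ^ r \<le> card C"
  shows "\<exists>as. length as = r \<and> divisible_by \<phi> (quasi_pfister as)"
proof -
  interpret V: vector_space "sq_scale::'a\<Rightarrow>'a\<Rightarrow>'a" using vector_space_sq_scale[OF two] .
  obtain \<alpha> where \<alpha>: "length \<alpha> = r" "set \<alpha> \<subseteq> C" "anisotropic (quasi_pfister \<alpha>)"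
    using exists_anisotropic_quasi_pfister[OF two C(2-4)] by blast
  let ?\<pi> = "quasi_pfister \<alpha>"
  have stab: "set ?\<pi> \<subseteq> mult_stabilizer (set \<phi>)"
    using quasi_pfister_subset_mult_stabilizer[OF two] \<alpha>(2) C(1) by blast
  have "?\<pi> \<noteq> []" using one_in_quasi_pfister[of \<alpha>] by auto
  then obtain \<tau> where \<tau>: "set \<tau> \<subseteq> set \<phi>" "anisotropic (qf_tensor ?\<pi> \<tau>)"
    "set \<phi> \<subseteq> V.span (set (qf_tensor ?\<pi> \<tau>))"
    using exists_qf_tensor_basis[OF two \<alpha>(3) _ quasi_pfister_subset_mult_stabilizer_self[OF two] stab]
    by blast
  have "V.span (set \<phi>) = V.span (set (qf_tensor ?\<pi> \<tau>))"
    using \<tau>(3) set_qf_tensor_subset_sq_span[OF stab \<tau>(1)] by (simp add: V.span_eq)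
  then have "isometric \<phi> (qf_tensor ?\<pi> \<tau>)" by (rule isometric_if_sq_span_eq[OF two A \<tau>(2)])
  then show ?thesis using \<alpha>(1) unfolding divisible_by_def by blast
qed

lemma anisotropic_nth_nonzero:
  assumes A: "anisotropic \<phi>" and i: "i < length \<phi>"
  shows "\<phi>!i \<noteq> 0"
proof
  assume "\<phi>!i = 0"
  then have "qf_eval \<phi> (\<lambda>k. if k = i then 1 else 0) = 0" using qf_eval_unit[OF i] by simp
  from A[unfolded anisotropic_def, rule_format, OF this i] show False by simp
qed

lemma module_hom_mult_right:
  assumes two: "(2::'a::field) = 0"
  shows "module_hom sq_scale sq_scale (\<lambda>x. x * (u::'a))"
proof -
  interpret V: vector_space "sq_scale::'a\<Rightarrow>'a\<Rightarrow>'a" using vector_space_sq_scale[OF two] .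
  show ?thesis by (simp add: module_hom_iff V.module_axioms sq_scale_def algebra_simps)
qed

lemma anisotropic_qf_tensor_left:
  assumes two: "(2::'a::field) = 0" and A: "anisotropic (qf_tensor \<pi> \<tau>)" and ne: "\<tau> \<noteq> []"
  shows "anisotropic (\<pi>::'a list)"
proof (cases "\<pi> = []")
  case True then show ?thesis by (simp add: anisotropic_def)
next
  case False
  interpret V: vector_space "sq_scale::'a\<Rightarrow>'a\<Rightarrow>'a" using vector_space_sq_scale[OF two] .
  let ?\<psi> = "qf_tensor \<pi> \<tau>" and ?t = "hd \<tau>"
  have d\<psi>: "distinct ?\<psi>" and i\<psi>: "V.independent (set ?\<psi>)"
    using A anisotropic_iff_distinct_sq_independent[OF two] by auto
  have sub: "(\<lambda>p. p * ?t) ` set \<pi> \<subseteq> set ?\<psi>" using hd_in_set[OF ne] by (auto simp: set_qf_tensor)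
  have "hd \<pi> * ?t \<in> set ?\<psi>" using sub hd_in_set[OF False] by blast
  moreover have "0 \<notin> set ?\<psi>" using i\<psi> V.dependent_zero by blast
  ultimately have t: "?t \<noteq> 0" by auto
  have "inj (\<lambda>q. q * inverse ?t)" using t by (simp add: inj_on_def)
  moreover have "V.independent ((\<lambda>p. p * ?t) ` set \<pi>)" using V.independent_mono[OF i\<psi> sub] .
  ultimately have "V.independent ((\<lambda>q. q * inverse ?t) ` (\<lambda>p. p * ?t) ` set \<pi>)"
    using module_hom.independent_inj_image[OF module_hom_mult_right[OF two]] by blast
  then have i\<pi>: "V.independent (set \<pi>)" using t by (simp add: image_image mult.assoc)
  have "card (set ?\<psi>) \<le> length \<tau> * card (set \<pi>)"
  proof -
    have "set ?\<psi> = (\<Union>t\<in>set \<tau>. (\<lambda>p. p * t) ` set \<pi>)" by (auto simp: set_qf_tensor)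
    then have "card (set ?\<psi>) \<le> (\<Sum>t\<in>set \<tau>. card ((\<lambda>p. p * t) ` set \<pi>))" by (simp add: card_UN_le)
    also have "\<dots> \<le> (\<Sum>t\<in>set \<tau>. card (set \<pi>))" by (rule sum_mono) (simp add: card_image_le)
    also have "\<dots> = card (set \<tau>) * card (set \<pi>)" by simp
    also have "\<dots> \<le> length \<tau> * card (set \<pi>)" by (simp add: card_length)
    finally show ?thesis .
  qed
  then have "length \<pi> \<le> card (set \<pi>)"
    using ne by (simp add: distinct_card[OF d\<psi>] length_qf_tensor mult.commute)
  then have "distinct \<pi>" using card_length card_distinct le_antisym by blast
  then show ?thesis using i\<pi> anisotropic_iff_distinct_sq_independent[OF two] by blast
qed

section \<open>Field embeddings\<close>

locale field_embedding =
  fixes \<sigma> :: "'a::field \<Rightarrow> 'b::field"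
  assumes field_hom: "field_hom \<sigma>"
begin

lemma hom_zero [simp]: "\<sigma> 0 = 0" and hom_one [simp]: "\<sigma> 1 = 1"
  and hom_add: "\<sigma> (x + y) = \<sigma> x + \<sigma> y" and hom_mult: "\<sigma> (x * y) = \<sigma> x * \<sigma> y"
  using field_hom by (auto simp: field_hom_def)

lemma hom_uminus: "\<sigma> (- x) = - \<sigma> x"
  using hom_add[of x "- x"] by (simp add: eq_neg_iff_add_eq_0 add.commute)

lemma hom_sum: "\<sigma> (sum f A) = (\<Sum>x\<in>A. \<sigma> (f x))"
  by (induct A rule: infinite_finite_induct) (auto simp: hom_add)

lemma hom_power: "\<sigma> (x ^ n) = \<sigma> x ^ n"
  by (induct n) (auto simp: hom_mult)

lemma hom_sq_scale: "\<sigma> (sq_scale c x) = sq_scale (\<sigma> c) (\<sigma> x)"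
  by (simp add: sq_scale_def hom_mult hom_power)

lemma hom_eq_zero_iff [simp]: "\<sigma> x = 0 \<longleftrightarrow> x = 0"
proof
  assume "\<sigma> x = 0"
  then show "x = 0" using hom_mult[of x "inverse x"] by (cases "x = 0") auto
qed simp

lemma inj_hom: "inj \<sigma>"
  by (rule injI) (metis add_diff_cancel_left' diff_add_cancel hom_add hom_eq_zero_iff)

lemma char2_target: "(2::'a) = 0 \<Longrightarrow> (2::'b) = 0"
  using hom_add[of 1 1] by (metis hom_one hom_zero one_add_one)

lemma sq_independent_hom_image:
  assumes two: "(2::'a) = 0" and fC: "finite C" and iC: "sq_independent (\<sigma> ` C)"
  shows "sq_independent C"
proof -
  interpret V: vector_space "sq_scale::'a\<Rightarrow>'a\<Rightarrow>'a" using vector_space_sq_scale[OF two] .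
  interpret W: vector_space "sq_scale::'b\<Rightarrow>'b\<Rightarrow>'b" using vector_space_sq_scale[OF char2_target[OF two]] .
  have inj: "inj_on \<sigma> C" using inj_hom by (rule inj_on_subset) simp
  show ?thesis
  proof (rule V.independent_if_scalars_zero[OF fC])
    fix f x assume s: "(\<Sum>x\<in>C. sq_scale (f x) x) = 0" and x: "x \<in> C"
    let ?g = "\<lambda>y. \<sigma> (f (inv_into C \<sigma> y))"
    have "(\<Sum>y\<in>\<sigma> ` C. sq_scale (?g y) y) = \<sigma> (\<Sum>x\<in>C. sq_scale (f x) x)"
      by (simp add: sum.reindex[OF inj] inv_into_f_f[OF inj] hom_sum hom_sq_scale)
    also have "\<dots> = 0" using s by simp
    finally have "?g (\<sigma> x) = 0" by (rule W.independentD[OF iC finite_imageI[OF fC] order_refl]) (use x in simp)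
    then show "f x = 0" using inv_into_f_f[OF inj x] by simp
  qed
qed

lemma exists_sq_independent_preimage:
  assumes two: "(2::'a) = 0"
    and fP: "finite P" and iP: "sq_independent P" and sub: "P \<subseteq> sq_span (\<sigma> ` T)"
  shows "\<exists>C\<subseteq>T. finite C \<and> sq_independent C \<and> card P \<le> card C"
proof -
  interpret W: vector_space "sq_scale::'b\<Rightarrow>'b\<Rightarrow>'b" using vector_space_sq_scale[OF char2_target[OF two]] .
  obtain B where B: "B \<subseteq> \<sigma> ` T" "W.independent B" "\<sigma> ` T \<subseteq> W.span B"
    by (rule W.maximal_independent_subset)
  have "P \<subseteq> W.span B" using sub W.span_mono[OF B(3)] W.span_span by blast
  obtain B' where B': "B' \<subseteq> B" "finite B'" "card P \<le> card B'"
  proof (cases "finite B")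
    case True
    then show ?thesis using that[of B] W.independent_span_bound[OF True iP \<open>P \<subseteq> W.span B\<close>] by blast
  next
    case False
    then show ?thesis using that infinite_arbitrarily_large[OF False] by (metis order_refl)
  qed
  define C where "C = {x \<in> T. \<sigma> x \<in> B'}"
  have sC: "\<sigma> ` C = B'" using B'(1) B(1) by (auto simp: C_def)
  have inj: "inj_on \<sigma> C" using inj_hom by (rule inj_on_subset) simp
  have fC: "finite C" using sC B'(2) inj finite_imageD by blast
  have "sq_independent C"
    using sq_independent_hom_image[OF two fC] sC W.independent_mono[OF B(2) B'(1)] by simp
  moreover have "card C = card B'" using sC card_image[OF inj] by simp
  ultimately show ?thesis using fC B'(3) by (intro exI[of _ C]) (auto simp: C_def)
qed

end

section \<open>Polynomials in a purely transcendental extension\<close>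

definition monomial_value :: "('b::field \<Rightarrow> nat) \<Rightarrow> 'b" where
  "monomial_value m = (\<Prod>s\<in>{s. m s \<noteq> 0}. s ^ m s)"

definition poly_monomial :: "('b \<Rightarrow> nat) \<Rightarrow> 'a \<Rightarrow> ('b \<Rightarrow> nat) \<Rightarrow> 'a::zero" where
  "poly_monomial \<mu> c = (\<lambda>m. if m = \<mu> then c else 0)"

lemma monomial_value_superset:
  assumes "finite D" "{s. m s \<noteq> 0} \<subseteq> D"
  shows "monomial_value m = (\<Prod>s\<in>D. s ^ m s)"
  unfolding monomial_value_def by (rule prod.mono_neutral_left) (use assms in auto)

lemma monomial_value_add:
  assumes "finite {s. m s \<noteq> 0}" "finite {s. m' s \<noteq> 0}"
  shows "monomial_value (\<lambda>s. m s + m' s) = monomial_value m * (monomial_value m' :: 'b::field)"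
proof -
  let ?D = "{s. m s \<noteq> 0} \<union> {s. m' s \<noteq> 0}"
  have D: "finite ?D" using assms by simp
  have "monomial_value (\<lambda>s. m s + m' s) = (\<Prod>s\<in>?D. s ^ (m s + m' s))"
    by (rule monomial_value_superset[OF D]) auto
  also have "\<dots> = (\<Prod>s\<in>?D. s ^ m s) * (\<Prod>s\<in>?D. s ^ m' s)"
    by (simp add: power_add prod.distrib)
  also have "(\<Prod>s\<in>?D. s ^ m s) = monomial_value m"
    by (rule monomial_value_superset[OF D, symmetric]) auto
  also have "(\<Prod>s\<in>?D. s ^ m' s) = monomial_value m'"
    by (rule monomial_value_superset[OF D, symmetric]) auto
  finally show ?thesis .
qed

lemma monomial_value_double:
  assumes "finite {s. m s \<noteq> 0}"
  shows "monomial_value (\<lambda>s. 2 * m s) = (monomial_value m :: 'b::field)^2"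
proof -
  have "monomial_value (\<lambda>s. 2 * m s) = (\<Prod>s\<in>{s. m s \<noteq> 0}. (s ^ m s)^2)"
    by (subst monomial_value_superset[OF assms]) (auto simp: power_mult mult.commute)
  then show ?thesis by (simp add: monomial_value_def prod_power_distrib)
qed

lemma is_poly_over_zero: "is_poly_over S (\<lambda>m. 0)"
  by (simp add: is_poly_over_def)

lemma is_poly_over_add:
  assumes "is_poly_over S p" "is_poly_over S q"
  shows "is_poly_over S (\<lambda>m. p m + (q m :: 'a::comm_monoid_add))"
proof -
  have "{m. p m + q m \<noteq> 0} \<subseteq> {m. p m \<noteq> 0} \<union> {m. q m \<noteq> 0}" by auto
  then show ?thesis using assms unfolding is_poly_over_def by (metis (mono_tags) finite_Un finite_subset add_0)
qed

lemma is_poly_over_scale: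
  assumes "is_poly_over S p"
  shows "is_poly_over S (\<lambda>m. c * (p m :: 'a::mult_zero))"
proof -
  have "{m. c * p m \<noteq> 0} \<subseteq> {m. p m \<noteq> 0}" by auto
  then show ?thesis using assms unfolding is_poly_over_def by (metis (mono_tags) finite_subset mult_zero_right)
qed

lemma is_poly_over_sum:
  "finite I \<Longrightarrow> (\<And>i. i \<in> I \<Longrightarrow> is_poly_over S (p i)) \<Longrightarrow>
    is_poly_over S (\<lambda>m. \<Sum>i\<in>I. (p i m :: 'a::comm_monoid_add))"
  by (induct I rule: finite_induct) (auto simp: is_poly_over_zero is_poly_over_add)

lemma is_poly_over_monomial:
  "finite {s. \<mu> s \<noteq> 0} \<Longrightarrow> {s. \<mu> s \<noteq> 0} \<subseteq> S \<Longrightarrow> is_poly_over S (poly_monomial \<mu> c)"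
  unfolding is_poly_over_def poly_monomial_def by auto

definition double_exp :: "('b \<Rightarrow> nat) \<Rightarrow> 'b \<Rightarrow> nat" where
  "double_exp \<nu> = (\<lambda>s. 2 * \<nu> s)"

definition half_exp :: "('b \<Rightarrow> nat) \<Rightarrow> 'b \<Rightarrow> nat" where
  "half_exp \<mu> = (\<lambda>s. \<mu> s div 2)"

definition frob_poly :: "(('b \<Rightarrow> nat) \<Rightarrow> 'a::field) \<Rightarrow> ('b \<Rightarrow> nat) \<Rightarrow> 'a" where
  "frob_poly p \<mu> = (if \<forall>s. even (\<mu> s) then (p (half_exp \<mu>))^2 else 0)"

lemma half_double_exp [simp]: "half_exp (double_exp \<nu>) = \<nu>"
  by (simp add: half_exp_def double_exp_def)

lemma double_half_exp: "\<forall>s. even (\<mu> s) \<Longrightarrow> double_exp (half_exp \<mu>) = \<mu>"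
  by (auto simp: half_exp_def double_exp_def fun_eq_iff)

lemma inj_double_exp: "inj double_exp"
  by (metis half_double_exp injI)

lemma frob_poly_double_exp [simp]: "frob_poly p (double_exp \<nu>) = (p \<nu>)^2"
  unfolding frob_poly_def half_double_exp by (simp add: double_exp_def)

lemma support_half_exp:
  "\<forall>s. even (\<mu> s) \<Longrightarrow> {s. half_exp \<mu> s \<noteq> 0} = {s. \<mu> s \<noteq> 0}"
  by (force simp: half_exp_def dvd_div_eq_0_iff)

lemma support_frob_poly: "{\<mu>. frob_poly p \<mu> \<noteq> 0} = double_exp ` {\<nu>. p \<nu> \<noteq> 0}"
proof safe
  fix \<mu> assume "frob_poly p \<mu> \<noteq> 0"
  then have e: "\<forall>s. even (\<mu> s)" and "p (half_exp \<mu>) \<noteq> 0"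
    by (auto simp: frob_poly_def split: if_splits)
  then show "\<mu> \<in> double_exp ` {\<nu>. p \<nu> \<noteq> 0}" using double_half_exp[OF e] by force
qed simp

lemma is_poly_over_frob_poly:
  assumes p: "is_poly_over S p"
  shows "is_poly_over S (frob_poly p)"
proof -
  have "finite {s. \<mu> s \<noteq> 0} \<and> {s. \<mu> s \<noteq> 0} \<subseteq> S" if "frob_poly p \<mu> \<noteq> 0" for \<mu>
  proof -
    have "\<mu> \<in> {\<mu>. frob_poly p \<mu> \<noteq> 0}" using that by simp
    then obtain \<nu> where "p \<nu> \<noteq> 0" "\<mu> = double_exp \<nu>" unfolding support_frob_poly by blast
    then show ?thesis using p by (simp add: double_exp_def is_poly_over_def)
  qed
  moreover have "finite {\<mu>. frob_poly p \<mu> \<noteq> 0}"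
    using p by (simp add: support_frob_poly is_poly_over_def)
  ultimately show ?thesis unfolding is_poly_over_def by blast
qed

context field_embedding
begin

lemma poly_eval_superset:
  assumes "finite D" "{m. p m \<noteq> 0} \<subseteq> D"
  shows "poly_eval \<sigma> p = (\<Sum>m\<in>D. \<sigma> (p m) * monomial_value m)"
  unfolding poly_eval_def monomial_value_def
  by (rule sum.mono_neutral_left) (use assms in auto)

lemma poly_eval_zero: "poly_eval \<sigma> (\<lambda>m. 0) = 0"
  by (simp add: poly_eval_def)

lemma poly_eval_add:
  assumes "is_poly_over S p" "is_poly_over S q"
  shows "poly_eval \<sigma> (\<lambda>m. p m + q m) = poly_eval \<sigma> p + poly_eval \<sigma> q"
proof -
  let ?D = "{m. p m \<noteq> 0} \<union> {m. q m \<noteq> 0}"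
  have D: "finite ?D" using assms by (auto simp: is_poly_over_def)
  have "poly_eval \<sigma> (\<lambda>m. p m + q m) = (\<Sum>m\<in>?D. \<sigma> (p m + q m) * monomial_value m)"
    by (rule poly_eval_superset[OF D]) auto
  also have "\<dots> = (\<Sum>m\<in>?D. \<sigma> (p m) * monomial_value m) + (\<Sum>m\<in>?D. \<sigma> (q m) * monomial_value m)"
    by (simp add: hom_add distrib_right sum.distrib)
  also have "\<dots> = poly_eval \<sigma> p + poly_eval \<sigma> q"
    by (simp add: poly_eval_superset[OF D])
  finally show ?thesis .
qed

lemma poly_eval_scale:
  assumes "is_poly_over S p"
  shows "poly_eval \<sigma> (\<lambda>m. c * p m) = \<sigma> c * poly_eval \<sigma> p"
proof -
  have D: "finite {m. p m \<noteq> 0}" using assms by (simp add: is_poly_over_def)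
  have "poly_eval \<sigma> (\<lambda>m. c * p m) = (\<Sum>m\<in>{m. p m \<noteq> 0}. \<sigma> (c * p m) * monomial_value m)"
    by (rule poly_eval_superset[OF D]) auto
  also have "\<dots> = \<sigma> c * poly_eval \<sigma> p"
    by (simp add: poly_eval_superset[OF D order_refl] hom_mult sum_distrib_left mult_ac)
  finally show ?thesis .
qed

lemma poly_eval_sum:
  "finite I \<Longrightarrow> (\<And>i. i \<in> I \<Longrightarrow> is_poly_over S (p i)) \<Longrightarrow>
    poly_eval \<sigma> (\<lambda>m. \<Sum>i\<in>I. p i m) = (\<Sum>i\<in>I. poly_eval \<sigma> (p i))"
proof (induct I rule: finite_induct)
  case empty then show ?case by (simp add: poly_eval_zero)
next
  case (insert i I)
  then have "poly_eval \<sigma> (\<lambda>m. p i m + (\<Sum>j\<in>I. p j m)) = poly_eval \<sigma> (p i) + poly_eval \<sigma> (\<lambda>m. \<Sum>j\<in>I. p j m)"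
    by (intro poly_eval_add[of S]) (auto intro: is_poly_over_sum)
  then show ?case using insert by simp
qed

lemma poly_eval_monomial: "poly_eval \<sigma> (poly_monomial \<mu> c) = \<sigma> c * monomial_value \<mu>"
proof -
  have "poly_eval \<sigma> (poly_monomial \<mu> c) = (\<Sum>m\<in>{\<mu>}. \<sigma> (poly_monomial \<mu> c m) * monomial_value m)"
    by (rule poly_eval_superset) (auto simp: poly_monomial_def)
  then show ?thesis by (simp add: poly_monomial_def)
qed

lemma poly_eval_frob_poly:
  assumes two: "(2::'b) = 0" and p: "is_poly_over S p"
  shows "poly_eval \<sigma> (frob_poly p) = (poly_eval \<sigma> p)^2"
proof -
  let ?A = "{\<nu>. p \<nu> \<noteq> 0}"
  have A: "finite ?A" using p by (simp add: is_poly_over_def)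
  have "poly_eval \<sigma> (frob_poly p) = (\<Sum>\<mu>\<in>double_exp ` ?A. \<sigma> (frob_poly p \<mu>) * monomial_value \<mu>)"
    by (rule poly_eval_superset) (use A support_frob_poly in auto)
  also have "\<dots> = (\<Sum>\<nu>\<in>?A. \<sigma> (frob_poly p (double_exp \<nu>)) * monomial_value (double_exp \<nu>))"
    by (rule sum.reindex[OF inj_on_subset[OF inj_double_exp subset_UNIV], unfolded comp_def])
  also have "\<dots> = (\<Sum>\<nu>\<in>?A. (\<sigma> (p \<nu>) * monomial_value \<nu>)^2)"
  proof (rule sum.cong[OF refl])
    fix \<nu> assume "\<nu> \<in> ?A"
    then have "finite {s. \<nu> s \<noteq> 0}" using p by (simp add: is_poly_over_def)
    then have "monomial_value (double_exp \<nu>) = (monomial_value \<nu>)^2"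
      unfolding double_exp_def by (rule monomial_value_double)
    then show "\<sigma> (frob_poly p (double_exp \<nu>)) * monomial_value (double_exp \<nu>) = (\<sigma> (p \<nu>) * monomial_value \<nu>)^2"
      by (simp add: hom_power power_mult_distrib)
  qed
  also have "\<dots> = (poly_eval \<sigma> p)^2"
    by (simp add: power2_sum_char2[OF two, symmetric] poly_eval_superset[OF A order_refl])
  finally show ?thesis .
qed

text \<open>A monomial with even exponents is a square, that is, a scalar of the \<open>K\<^sup>2\<close>-vector space \<open>K\<close>.\<close>
lemma poly_eval_in_sq_span_image:
  assumes two: "(2::'b) = 0" and t: "is_poly_over S t"
    and coeffs: "\<And>\<mu>. t \<mu> \<noteq> 0 \<Longrightarrow> t \<mu> \<in> T \<and> (\<forall>s. even (\<mu> s))"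
  shows "poly_eval \<sigma> t \<in> sq_span (\<sigma> ` T)"
proof -
  interpret W: vector_space "sq_scale::'b\<Rightarrow>'b\<Rightarrow>'b" using vector_space_sq_scale[OF two] .
  have "\<sigma> (t \<mu>) * monomial_value \<mu> \<in> W.span (\<sigma> ` T)" if \<mu>: "t \<mu> \<noteq> 0" for \<mu>
  proof -
    have e: "\<forall>s. even (\<mu> s)" and T: "t \<mu> \<in> T" using coeffs[OF \<mu>] by auto
    have "finite {s. \<mu> s \<noteq> 0}" using t \<mu> unfolding is_poly_over_def by blast
    then have "finite {s. half_exp \<mu> s \<noteq> 0}" using support_half_exp[OF e] by simp
    then have "monomial_value \<mu> = (monomial_value (half_exp \<mu>))^2"
      using monomial_value_double double_half_exp[OF e] unfolding double_exp_def by metis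
    then have "\<sigma> (t \<mu>) * monomial_value \<mu> = sq_scale (monomial_value (half_exp \<mu>)) (\<sigma> (t \<mu>))"
      by (simp add: sq_scale_def)
    then show ?thesis using T by (simp add: W.span_scale W.span_base)
  qed
  moreover have "poly_eval \<sigma> t = (\<Sum>\<mu>\<in>{\<mu>. t \<mu> \<noteq> 0}. \<sigma> (t \<mu>) * monomial_value \<mu>)"
    by (rule poly_eval_superset) (use t in \<open>auto simp: is_poly_over_def\<close>)
  ultimately show ?thesis by (auto intro: W.span_sum)
qed

end

text \<open>Coefficientwise form of \<open>\<phi>\<^sub>i \<cdot> t = \<Sum>\<^sub>k \<phi>\<^sub>k h\<^sub>i\<^sub>k\<^sup>2\<close> for polynomials \<open>t\<close>, \<open>h\<^sub>i\<^sub>k\<close>.\<close>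
lemma coeffs_in_mult_stabilizer:
  assumes two: "(2::'a::field) = 0" and A: "anisotropic (\<phi>::'a list)" and ne: "\<phi> \<noteq> []"
    and coeff: "\<And>i \<mu>. i < length \<phi> \<Longrightarrow> \<phi>!i * t \<mu> = (\<Sum>k<length \<phi>. \<phi>!k * frob_poly (h i k) \<mu>)"
  shows "t \<mu> \<in> mult_stabilizer (set \<phi>)" and "t \<mu> \<noteq> 0 \<Longrightarrow> \<forall>s. even (\<mu> s)"
proof -
  have "t \<mu> * x \<in> sq_span (set \<phi>)" if "x \<in> set \<phi>" for x
  proof -
    obtain i where i: "i < length \<phi>" "x = \<phi>!i" using \<open>x \<in> set \<phi>\<close> by (auto simp: in_set_conv_nth)
    let ?y = "\<lambda>k. if \<forall>s. even (\<mu> s) then h i k (half_exp \<mu>) else 0"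
    have "frob_poly (h i k) \<mu> = (?y k)^2" for k by (simp add: frob_poly_def)
    then have "t \<mu> * x = qf_eval \<phi> ?y"
      using coeff[OF i(1), of \<mu>] i(2) by (simp add: qf_eval_def mult.commute)
    then show ?thesis using qf_eval_in_sq_span[OF two] by simp
  qed
  then show "t \<mu> \<in> mult_stabilizer (set \<phi>)" by (simp add: mult_stabilizer_def)
  show "\<forall>s. even (\<mu> s)" if "t \<mu> \<noteq> 0"
  proof (rule ccontr)
    assume odd: "\<not> (\<forall>s. even (\<mu> s))"
    have "\<phi>!0 * t \<mu> = 0" using coeff[of 0 \<mu>] ne unfolding frob_poly_def if_not_P[OF odd] by simp
    then show False using that anisotropic_nth_nonzero[OF A] ne by simp
  qed
qed

locale purely_transcendental_ext = field_embedding \<sigma>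
  for \<sigma> :: "'a::field \<Rightarrow> 'b::field" +
  fixes S :: "'b set"
  assumes alg_indep: "alg_indep \<sigma> S" and generates: "generates_field \<sigma> S"
begin

lemma poly_eval_inject:
  assumes p: "is_poly_over S p" and q: "is_poly_over S q" and eq: "poly_eval \<sigma> p = poly_eval \<sigma> q"
  shows "p = q"
proof -
  have d: "is_poly_over S (\<lambda>m. p m + (-1) * q m)"
    by (intro is_poly_over_add is_poly_over_scale p q)
  have "poly_eval \<sigma> (\<lambda>m. p m + (-1) * q m) = poly_eval \<sigma> p + \<sigma> (-1) * poly_eval \<sigma> q"
    by (simp only: poly_eval_add[OF p is_poly_over_scale[OF q]] poly_eval_scale[OF q])
  also have "\<dots> = 0" using eq by (simp add: hom_uminus)
  finally have "\<forall>m. p m + (-1) * q m = 0" using alg_indep d unfolding alg_indep_def by blast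
  then show ?thesis by (auto simp: fun_eq_iff)
qed

lemma poly_coeffs_eq_if_poly_eval_eq:
  assumes I: "finite I" and p: "is_poly_over S p"
    and eq: "\<sigma> a * poly_eval \<sigma> p = (\<Sum>k\<in>I. \<sigma> (b k) * poly_eval \<sigma> (q k))"
    and q: "\<And>k. k \<in> I \<Longrightarrow> is_poly_over S (q k)"
  shows "a * p \<mu> = (\<Sum>k\<in>I. b k * q k \<mu>)"
proof -
  have "poly_eval \<sigma> (\<lambda>\<mu>. \<Sum>k\<in>I. b k * q k \<mu>) = (\<Sum>k\<in>I. poly_eval \<sigma> (\<lambda>\<mu>. b k * q k \<mu>))"
    by (rule poly_eval_sum[OF I]) (rule is_poly_over_scale, erule q)
  also have "\<dots> = (\<Sum>k\<in>I. \<sigma> (b k) * poly_eval \<sigma> (q k))"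
    by (rule sum.cong[OF refl]) (rule poly_eval_scale, erule q)
  also have "\<dots> = poly_eval \<sigma> (\<lambda>\<mu>. a * p \<mu>)" using eq by (simp add: poly_eval_scale[OF p])
  finally have "(\<lambda>\<mu>. a * p \<mu>) = (\<lambda>\<mu>. \<Sum>k\<in>I. b k * q k \<mu>)"
    by (intro poly_eval_inject[symmetric] is_poly_over_sum is_poly_over_scale I p q)
  then show ?thesis by (rule fun_cong)
qed

definition poly_values :: "'b set" where
  "poly_values = {poly_eval \<sigma> p | p. is_poly_over S p}"

lemma poly_eval_in_poly_values: "is_poly_over S p \<Longrightarrow> poly_eval \<sigma> p \<in> poly_values"
  unfolding poly_values_def by blast

lemma poly_values_zero: "0 \<in> poly_values"
  using poly_eval_in_poly_values[OF is_poly_over_zero] poly_eval_zero by simp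

lemma poly_values_add:
  assumes "x \<in> poly_values" "y \<in> poly_values"
  shows "x + y \<in> poly_values"
proof -
  obtain p q where pq: "is_poly_over S p" "is_poly_over S q" "x = poly_eval \<sigma> p" "y = poly_eval \<sigma> q"
    using assms unfolding poly_values_def by blast
  then have "x + y = poly_eval \<sigma> (\<lambda>m. p m + q m)" by (simp add: poly_eval_add)
  then show ?thesis using poly_eval_in_poly_values[OF is_poly_over_add[OF pq(1,2)]] by simp
qed

lemma poly_values_scale:
  assumes "x \<in> poly_values"
  shows "\<sigma> c * x \<in> poly_values"
proof -
  obtain p where p: "is_poly_over S p" "x = poly_eval \<sigma> p"
    using assms unfolding poly_values_def by blast
  then have "\<sigma> c * x = poly_eval \<sigma> (\<lambda>m. c * p m)" by (simp add: poly_eval_scale)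
  then show ?thesis using poly_eval_in_poly_values[OF is_poly_over_scale[OF p(1)]] by simp
qed

lemma poly_values_sum:
  "finite I \<Longrightarrow> (\<And>i. i \<in> I \<Longrightarrow> f i \<in> poly_values) \<Longrightarrow> sum f I \<in> poly_values"
  by (induct I rule: finite_induct) (auto simp: poly_values_zero poly_values_add)

lemma poly_values_monomial:
  assumes "finite {s. \<mu> s \<noteq> 0}" "{s. \<mu> s \<noteq> 0} \<subseteq> S"
  shows "\<sigma> c * monomial_value \<mu> \<in> poly_values"
  using poly_eval_in_poly_values[OF is_poly_over_monomial[OF assms]] by (simp add: poly_eval_monomial)

lemma poly_values_hom: "\<sigma> c \<in> poly_values"
  using poly_values_monomial[of "\<lambda>s. 0" c] by (simp add: monomial_value_def)

lemma poly_values_var: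
  assumes "s \<in> S"
  shows "s \<in> poly_values"
proof -
  let ?\<mu> = "\<lambda>t. if t = s then 1::nat else 0"
  have "{t. ?\<mu> t \<noteq> 0} = {s}" by auto
  then have "\<sigma> 1 * monomial_value ?\<mu> \<in> poly_values" using assms by (intro poly_values_monomial) auto
  moreover have "monomial_value ?\<mu> = s" unfolding monomial_value_def by (simp add: Collect_conv_if)
  ultimately show ?thesis by simp
qed

lemma poly_values_mult:
  assumes "x \<in> poly_values" "y \<in> poly_values"
  shows "x * y \<in> poly_values"
proof -
  obtain p q where pq: "is_poly_over S p" "is_poly_over S q" "x = poly_eval \<sigma> p" "y = poly_eval \<sigma> q"
    using assms unfolding poly_values_def by blast
  let ?A = "{m. p m \<noteq> 0}" and ?B = "{m. q m \<noteq> 0}"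
  have AB: "finite ?A" "finite ?B" using pq by (auto simp: is_poly_over_def)
  have "x * y = (\<Sum>m\<in>?A. \<Sum>m'\<in>?B. \<sigma> (p m) * monomial_value m * (\<sigma> (q m') * monomial_value m'))"
    using pq by (simp add: poly_eval_superset[OF AB(1) order_refl] poly_eval_superset[OF AB(2) order_refl]
      sum_product)
  also have "\<dots> \<in> poly_values"
  proof (intro poly_values_sum AB)
    fix m m' assume m: "m \<in> ?A" and m': "m' \<in> ?B"
    have fin: "finite {s. m s \<noteq> 0}" "finite {s. m' s \<noteq> 0}" and sub: "{s. m s \<noteq> 0} \<subseteq> S" "{s. m' s \<noteq> 0} \<subseteq> S"
      using pq m m' unfolding is_poly_over_def by blast+
    have "{s. m s + m' s \<noteq> 0} = {s. m s \<noteq> 0} \<union> {s. m' s \<noteq> 0}" by auto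
    then have "\<sigma> (p m * q m') * monomial_value (\<lambda>s. m s + m' s) \<in> poly_values"
      using fin sub by (intro poly_values_monomial) auto
    then show "\<sigma> (p m) * monomial_value m * (\<sigma> (q m') * monomial_value m') \<in> poly_values"
      by (simp add: monomial_value_add[OF fin] hom_mult mult_ac)
  qed
  finally show ?thesis .
qed

text \<open>The elements with a nonzero polynomial multiple form a subfield containing \<open>\<sigma> ` F\<close> and
  \<open>S\<close>, hence all of \<open>K\<close>.\<close>
lemma exists_poly_multiple: "\<exists>Q\<in>poly_values. Q \<noteq> 0 \<and> y * Q \<in> poly_values"
proof -
  let ?L = "{y. \<exists>Q\<in>poly_values. Q \<noteq> 0 \<and> y * Q \<in> poly_values}"
  have one: "1 \<in> poly_values" using poly_values_hom[of 1] by simp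
  have in_L: "x \<in> ?L" if "x \<in> poly_values" for x
    using that one by (intro CollectI bexI[of _ 1]) simp_all
  have "subfield ?L" unfolding subfield_def
  proof (intro conjI ballI)
    show "0 \<in> ?L" "1 \<in> ?L" using in_L[OF poly_values_zero] in_L[OF one] .
  next
    fix x y assume "x \<in> ?L" "y \<in> ?L"
    then obtain Q Q' where Q: "Q \<in> poly_values" "Q \<noteq> 0" "x * Q \<in> poly_values"
      and Q': "Q' \<in> poly_values" "Q' \<noteq> 0" "y * Q' \<in> poly_values" by blast
    have QQ': "Q * Q' \<in> poly_values" "Q * Q' \<noteq> 0" using poly_values_mult[OF Q(1) Q'(1)] Q Q' by auto
    have "(x + y) * (Q * Q') = (x * Q) * Q' + (y * Q') * Q" by algebra
    also have "\<dots> \<in> poly_values"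
      using poly_values_add[OF poly_values_mult[OF Q(3) Q'(1)] poly_values_mult[OF Q'(3) Q(1)]] .
    finally show "x + y \<in> ?L" using QQ' by (intro CollectI bexI[of _ "Q * Q'"]) simp_all
    have "(x * y) * (Q * Q') = (x * Q) * (y * Q')" by algebra
    also have "\<dots> \<in> poly_values" using poly_values_mult[OF Q(3) Q'(3)] .
    finally show "x * y \<in> ?L" using QQ' by (intro CollectI bexI[of _ "Q * Q'"]) simp_all
  next
    fix x assume "x \<in> ?L"
    then obtain Q where Q: "Q \<in> poly_values" "Q \<noteq> 0" "x * Q \<in> poly_values" by blast
    have "- x * Q = \<sigma> (- 1) * (x * Q)" by (simp add: hom_uminus)
    also have "\<dots> \<in> poly_values" using poly_values_scale[OF Q(3)] .
    finally show "- x \<in> ?L" using Q by (intro CollectI bexI[of _ Q]) simp_all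
    show "inverse x \<in> ?L"
    proof (cases "x = 0")
      case True then show ?thesis using in_L[OF poly_values_zero] by simp
    next
      case False
      then have inv: "inverse x * (x * Q) = Q" by (simp add: mult.assoc[symmetric])
      have "inverse x * (x * Q) \<in> poly_values" unfolding inv by (rule Q(1))
      then show ?thesis using Q False by (intro CollectI bexI[of _ "x * Q"]) simp_all
    qed
  qed
  moreover have "range \<sigma> \<subseteq> ?L" using in_L poly_values_hom by blast
  moreover have "S \<subseteq> ?L" using in_L poly_values_var by blast
  ultimately have "?L = UNIV" using generates unfolding generates_field_def by blast
  then have "y \<in> ?L" by simp
  then show ?thesis by simp
qed

lemma common_poly_multiple:
  "finite I \<Longrightarrow> \<exists>D\<in>poly_values. D \<noteq> 0 \<and> (\<forall>i\<in>I. f i * D \<in> poly_values)"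
proof (induct I rule: finite_induct)
  case empty then show ?case using poly_values_hom[of 1] by (intro bexI[of _ 1]) simp_all
next
  case (insert j I)
  then obtain D where D: "D \<in> poly_values" "D \<noteq> 0" "\<forall>i\<in>I. f i * D \<in> poly_values" by blast
  obtain Q where Q: "Q \<in> poly_values" "Q \<noteq> 0" "f j * Q \<in> poly_values"
    using exists_poly_multiple by blast
  have "f j * (D * Q) \<in> poly_values" using poly_values_mult[OF Q(3) D(1)] by (simp add: mult_ac)
  moreover have "f i * (D * Q) \<in> poly_values" if "i \<in> I" for i
    using poly_values_mult[OF D(3)[rule_format, OF that] Q(1)] by (simp add: mult.assoc)
  moreover have "D * Q \<in> poly_values" "D * Q \<noteq> 0" using poly_values_mult[OF D(1) Q(1)] D Q by auto
  ultimately show ?case by (intro bexI[of _ "D * Q"]) simp_all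
qed

lemma common_poly_denominator:
  assumes "finite I"
  obtains D p where "D \<in> poly_values" "D \<noteq> 0"
    "\<And>i. i \<in> I \<Longrightarrow> is_poly_over S (p i) \<and> f i * D = poly_eval \<sigma> (p i)"
proof -
  obtain D where D: "D \<in> poly_values" "D \<noteq> 0" "\<forall>i\<in>I. f i * D \<in> poly_values"
    using common_poly_multiple[OF assms] by blast
  then have "\<forall>i\<in>I. \<exists>q. is_poly_over S q \<and> f i * D = poly_eval \<sigma> q"
    by (auto simp: poly_values_def)
  then obtain p where "\<forall>i\<in>I. is_poly_over S (p i) \<and> f i * D = poly_eval \<sigma> (p i)"
    by (metis bchoice)
  then show ?thesis using that D(1,2) by blast
qed

lemma anisotropic_hom_image:
  assumes two: "(2::'a) = 0" and A: "anisotropic \<phi>"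
  shows "anisotropic (map \<sigma> \<phi>)"
  unfolding anisotropic_def
proof (intro allI impI)
  fix c i assume c: "qf_eval (map \<sigma> \<phi>) c = 0" and i: "i < length (map \<sigma> \<phi>)"
  let ?n = "length \<phi>"
  obtain D p where D: "D \<noteq> 0"
    and p: "\<And>k. k \<in> {..<?n} \<Longrightarrow> is_poly_over S (p k) \<and> c k * D = poly_eval \<sigma> (p k)"
    using common_poly_denominator[of "{..<?n}" c] by blast
  have "(\<Sum>k<?n. \<sigma> (\<phi>!k) * poly_eval \<sigma> (frob_poly (p k))) = (\<Sum>k<?n. \<sigma> (\<phi>!k) * (c k * D)^2)"
    using p by (intro sum.cong[OF refl]) (simp add: poly_eval_frob_poly[OF char2_target[OF two], of S])
  also have "\<dots> = D^2 * qf_eval (map \<sigma> \<phi>) c"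
    by (simp add: qf_eval_def sum_distrib_left power_mult_distrib mult_ac)
  finally have "\<sigma> 0 * poly_eval \<sigma> (\<lambda>\<mu>. 0) = (\<Sum>k<?n. \<sigma> (\<phi>!k) * poly_eval \<sigma> (frob_poly (p k)))"
    using c by (simp add: poly_eval_zero)
  then have "0 * 0 = (\<Sum>k<?n. \<phi>!k * frob_poly (p k) (double_exp \<nu>))" for \<nu>
    by (rule poly_coeffs_eq_if_poly_eval_eq[OF finite_lessThan is_poly_over_zero,
          where b = "\<lambda>k. \<phi>!k" and q = "\<lambda>k. frob_poly (p k)"])
      (simp add: is_poly_over_frob_poly p)
  then have "qf_eval \<phi> (\<lambda>k. p k \<nu>) = 0" for \<nu> by (simp add: qf_eval_def)
  then have "p i = (\<lambda>\<nu>. 0)" using A i unfolding anisotropic_def by auto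
  then have "c i * D = 0" using p[of i] i by (simp add: poly_eval_zero)
  then show "c i = 0" using D by simp
qed

lemma mult_stabilizer_descends:
  assumes two: "(2::'a) = 0" and A: "anisotropic \<phi>" and ne: "\<phi> \<noteq> []"
    and c: "c \<in> mult_stabilizer (set (map \<sigma> \<phi>))"
  shows "c \<in> sq_span (\<sigma> ` mult_stabilizer (set \<phi>))"
proof -
  have twoK: "(2::'b) = 0" by (rule char2_target[OF two])
  interpret W: vector_space "sq_scale::'b\<Rightarrow>'b\<Rightarrow>'b" using vector_space_sq_scale[OF twoK] .
  let ?n = "length \<phi>"
  have "distinct (map \<sigma> \<phi>)"
    using anisotropic_hom_image[OF two A] anisotropic_iff_distinct_sq_independent[OF twoK] by blast
  then have "\<forall>x\<in>set (map \<sigma> \<phi>). c * x \<in> range (qf_eval (map \<sigma> \<phi>))"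
    using c unfolding mult_stabilizer_def sq_span_eq_range_qf_eval[OF twoK \<open>distinct (map \<sigma> \<phi>)\<close>]
    by blast
  then have "\<forall>i\<in>{..<?n}. \<exists>z. c * \<sigma> (\<phi>!i) = qf_eval (map \<sigma> \<phi>) z" by auto
  then obtain y where "\<forall>i\<in>{..<?n}. c * \<sigma> (\<phi>!i) = qf_eval (map \<sigma> \<phi>) (y i)"
    by (metis bchoice)
  then have y: "\<And>i. i < ?n \<Longrightarrow> c * \<sigma> (\<phi>!i) = qf_eval (map \<sigma> \<phi>) (y i)" by simp
  let ?I = "insert None (Some ` ({..<?n} \<times> {..<?n}))"
  let ?f = "\<lambda>z. case z of None \<Rightarrow> c | Some (i, k) \<Rightarrow> y i k"
  obtain D p where D: "D \<in> poly_values" "D \<noteq> 0"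
    and p: "\<And>z. z \<in> ?I \<Longrightarrow> is_poly_over S (p z) \<and> ?f z * D = poly_eval \<sigma> (p z)"
    using common_poly_denominator[of ?I ?f] by blast
  define h where "h i k = p (Some (i, k))" for i k
  have h: "is_poly_over S (h i k) \<and> y i k * D = poly_eval \<sigma> (h i k)" if "i < ?n" "k < ?n" for i k
    using p[of "Some (i, k)"] that by (simp add: h_def)
  have "c * D^2 = (c * D) * D" by (simp add: power2_eq_square)
  also have "\<dots> \<in> poly_values" using poly_values_mult[OF poly_eval_in_poly_values D(1)] p[of None] by simp
  finally obtain t where t: "is_poly_over S t" "c * D^2 = poly_eval \<sigma> t"
    by (auto simp: poly_values_def)
  have coeff: "\<phi>!i * t \<mu> = (\<Sum>k<?n. \<phi>!k * frob_poly (h i k) \<mu>)" if i: "i < ?n" for i \<mu>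
  proof (rule poly_coeffs_eq_if_poly_eval_eq[OF finite_lessThan t(1),
        where b = "\<lambda>k. \<phi>!k" and q = "\<lambda>k. frob_poly (h i k)"])
    show "is_poly_over S (frob_poly (h i k))" if "k \<in> {..<?n}" for k
      using h i that by (simp add: is_poly_over_frob_poly)
    have "\<sigma> (\<phi>!i) * poly_eval \<sigma> t = (c * \<sigma> (\<phi>!i)) * D^2" using t(2) by (simp add: mult_ac)
    also have "\<dots> = (\<Sum>k<?n. \<sigma> (\<phi>!k) * (y i k * D)^2)"
      by (simp add: y[OF i] qf_eval_def sum_distrib_left sum_distrib_right power_mult_distrib mult_ac)
    also have "\<dots> = (\<Sum>k<?n. \<sigma> (\<phi>!k) * poly_eval \<sigma> (frob_poly (h i k)))"
      using h i by (intro sum.cong[OF refl]) (simp add: poly_eval_frob_poly[OF twoK, of S])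
    finally show "\<sigma> (\<phi>!i) * poly_eval \<sigma> t = (\<Sum>k<?n. \<sigma> (\<phi>!k) * poly_eval \<sigma> (frob_poly (h i k)))" .
  qed
  have "poly_eval \<sigma> t \<in> W.span (\<sigma> ` mult_stabilizer (set \<phi>))"
    using coeffs_in_mult_stabilizer[OF two A ne coeff]
    by (intro poly_eval_in_sq_span_image[OF twoK t(1)]) auto
  then have "sq_scale (inverse D) (poly_eval \<sigma> t) \<in> W.span (\<sigma> ` mult_stabilizer (set \<phi>))"
    by (rule W.span_scale)
  moreover have "sq_scale (inverse D) (poly_eval \<sigma> t) = c"
    using t(2)[symmetric] D by (simp add: sq_scale_def power2_eq_square field_simps)
  ultimately show ?thesis by (simp only:)
qed

lemma large_mult_stabilizer_if_divisible:
  assumes two: "(2::'a) = 0" and A: "anisotropic \<phi>" and ne: "\<phi> \<noteq> []"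
    and iso: "isometric (map \<sigma> \<phi>) (qf_tensor (quasi_pfister as) \<tau>)"
  shows "\<exists>C\<subseteq>mult_stabilizer (set \<phi>). finite C \<and> sq_independent C \<and> 2 ^ length as \<le> card C"
proof -
  have twoK: "(2::'b) = 0" by (rule char2_target[OF two])
  let ?\<pi> = "quasi_pfister as" and ?\<psi> = "qf_tensor (quasi_pfister as) \<tau>"
  have A\<psi>: "anisotropic ?\<psi>" by (rule isometric_anisotropic[OF twoK iso anisotropic_hom_image[OF two A]])
  have span: "sq_span (set (map \<sigma> \<phi>)) = sq_span (set ?\<psi>)" by (rule isometric_sq_span_eq[OF twoK iso])
  have "length (map \<sigma> \<phi>) = length ?\<psi>" using iso unfolding isometric_def by blast
  then have "\<tau> \<noteq> []" using ne by auto
  then have A\<pi>: "anisotropic ?\<pi>" by (rule anisotropic_qf_tensor_left[OF twoK A\<psi>])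
  have stab: "set ?\<pi> \<subseteq> mult_stabilizer (set ?\<psi>)"
    by (rule qf_tensor_mult_stabilizer[OF twoK quasi_pfister_subset_mult_stabilizer_self[OF twoK]])
  have "p * x \<in> sq_span (set (map \<sigma> \<phi>))" if p: "p \<in> set ?\<pi>" and x: "x \<in> set (map \<sigma> \<phi>)" for p x
  proof -
    interpret W: vector_space "sq_scale::'b\<Rightarrow>'b\<Rightarrow>'b" using vector_space_sq_scale[OF twoK] .
    have "x \<in> W.span (set ?\<psi>)" using x span W.span_superset by blast
    then have "p * x \<in> W.span (set ?\<psi>)" using mult_stabilizer_sq_span[OF twoK] stab p by blast
    then show ?thesis using span by simp
  qed
  then have "set ?\<pi> \<subseteq> mult_stabilizer (set (map \<sigma> \<phi>))" by (auto simp: mult_stabilizer_def)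
  then have sub: "set ?\<pi> \<subseteq> sq_span (\<sigma> ` mult_stabilizer (set \<phi>))"
    using mult_stabilizer_descends[OF two A ne] by blast
  have ind: "sq_independent (set ?\<pi>)" and card: "card (set ?\<pi>) = 2 ^ length as"
    using A\<pi> anisotropic_iff_distinct_sq_independent[OF twoK]
    by (auto simp: distinct_card length_quasi_pfister)
  obtain C where "C \<subseteq> mult_stabilizer (set \<phi>)" "finite C" "sq_independent C" "card (set ?\<pi>) \<le> card C"
    using exists_sq_independent_preimage[OF two finite_set ind sub] by blast
  then show ?thesis using card by auto
qed
end

theorem lemma5p1:
  fixes \<sigma> :: "'a::field \<Rightarrow> 'b::field" and \<phi> :: "'a list" and r :: nat
  assumes "CHAR('a) = 2"
    and "anisotropic \<phi>"
    and "purely_transcendental \<sigma>"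
    and "r > 0"
    and "\<exists>as :: 'b list. length as = r \<and> divisible_by (map \<sigma> \<phi>) (quasi_pfister as)"
  shows "\<exists>as :: 'a list. length as = r \<and> divisible_by \<phi> (quasi_pfister as)"
proof (cases "\<phi> = []")
  case True
  then have "divisible_by \<phi> (quasi_pfister (replicate r 1))"
    unfolding divisible_by_def by (intro exI[of _ "[]"]) (simp add: isometric_def qf_eval_def)
  then show ?thesis by (intro exI[of _ "replicate r 1"]) simp
next
  case False
  have two: "(2::'a) = 0" using of_nat_CHAR[where 'a='a] assms(1) by simp
  obtain S where "field_hom \<sigma>" "alg_indep \<sigma> S" "generates_field \<sigma> S"
    using assms(3) unfolding purely_transcendental_def by blast
  then interpret purely_transcendental_ext \<sigma> S by unfold_locales
  obtain as \<tau> where as: "length as = r" "isometric (map \<sigma> \<phi>) (qf_tensor (quasi_pfister as) \<tau>)"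
    using assms(5) unfolding divisible_by_def by blast
  then obtain C where "C \<subseteq> mult_stabilizer (set \<phi>)" "finite C" "sq_independent C" "2 ^ r \<le> card C"
    using large_mult_stabilizer_if_divisible[OF two assms(2) False] by blast
  then show ?thesis by (rule divisible_by_quasi_pfister_if_large_stabilizer[OF two assms(2)])
qed

end
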